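(* Let $\lambda\ge0$. If a solution $(\xi,L_1,L_2,L_3,R_1,R_2,R_3)$ of the system $(S_\lambda)$ is defined on $[T,S)$ with $S<\infty$ and cannot be extended past $S$, then $\lim_{r\to S}\xi(r)=-\infty$.
   Context: The system $(S_\lambda)$ is: $\xi'=-L_1^2-L_2^2-L_3^2-\lambda$, $L_i'=-\xi L_i+\frac{R_i^2}{2}-\frac{(R_j-R_k)^2}{2}-\lambda$, $R_i'=R_i(L_i-L_j-L_k)$ for $i=1,2,3$, $\{i,j,k\}=\{1,2,3\}$, where $'$ denotes $d/dr$. *)

theory Defs
  imports "HOL-Analysis.Analysis"
begin

text \<open>Solution of the system (S_lambda) on an interval I (one-sided derivatives at
endpoints belonging to I, via derivatives within I).\<close>
definition sol_on ::
  "real \<Rightarrow> real set \<Rightarrow> (real \<Rightarrow> real) \<Rightarrow> (real \<Rightarrow> real) \<Rightarrow> (real \<Rightarrow> real) \<Rightarrow> (real \<Rightarrow> real)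
   \<Rightarrow> (real \<Rightarrow> real) \<Rightarrow> (real \<Rightarrow> real) \<Rightarrow> (real \<Rightarrow> real) \<Rightarrow> bool" where
  "sol_on lam I xi L1 L2 L3 R1 R2 R3 \<longleftrightarrow>
    (\<forall>r\<in>I.
      (xi has_real_derivative (- ((L1 r)^2) - (L2 r)^2 - (L3 r)^2 - lam)) (at r within I) \<and>
      (L1 has_real_derivative (- xi r * L1 r + (R1 r)^2 / 2 - (R2 r - R3 r)^2 / 2 - lam)) (at r within I) \<and>
      (L2 has_real_derivative (- xi r * L2 r + (R2 r)^2 / 2 - (R3 r - R1 r)^2 / 2 - lam)) (at r within I) \<and>
      (L3 has_real_derivative (- xi r * L3 r + (R3 r)^2 / 2 - (R1 r - R2 r)^2 / 2 - lam)) (at r within I) \<and>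
      (R1 has_real_derivative (R1 r * (L1 r - L2 r - L3 r))) (at r within I) \<and>
      (R2 has_real_derivative (R2 r * (L2 r - L3 r - L1 r))) (at r within I) \<and>
      (R3 has_real_derivative (R3 r * (L3 r - L1 r - L2 r))) (at r within I))"

definition extendable_past ::
  "real \<Rightarrow> real \<Rightarrow> real \<Rightarrow> (real \<Rightarrow> real) \<Rightarrow> (real \<Rightarrow> real) \<Rightarrow> (real \<Rightarrow> real) \<Rightarrow> (real \<Rightarrow> real)
   \<Rightarrow> (real \<Rightarrow> real) \<Rightarrow> (real \<Rightarrow> real) \<Rightarrow> (real \<Rightarrow> real) \<Rightarrow> bool" where
  "extendable_past lam T S xi L1 L2 L3 R1 R2 R3 \<longleftrightarrow>
    (\<exists>S' > S. \<exists>xi' L1' L2' L3' R1' R2' R3'.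
       sol_on lam {T..<S'} xi' L1' L2' L3' R1' R2' R3' \<and>
       (\<forall>r\<in>{T..<S}. xi' r = xi r \<and> L1' r = L1 r \<and> L2' r = L2 r \<and> L3' r = L3 r \<and>
                      R1' r = R1 r \<and> R2' r = R2 r \<and> R3' r = R3 r))"

end

theory Submission
  imports Defs
begin

(* \<xi> is nonincreasing, since \<xi>' = -(L\<^sub>1\<^sup>2 + L\<^sub>2\<^sup>2 + L\<^sub>3\<^sup>2) - \<lambda> \<le> 0; so if \<xi> does not tend to -\<infinity>
   it is bounded on [T,S).  As (L\<^sub>i - L\<^sub>j - L\<^sub>k)\<^sup>2 \<le> 3 (L\<^sub>1\<^sup>2 + L\<^sub>2\<^sup>2 + L\<^sub>3\<^sup>2) \<le> -3\<xi>', the quantity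
   R\<^sub>i\<^sup>2 e\<^bsup>3\<xi> - r\<^esup> is nonincreasing, hence every R\<^sub>i is bounded; then every L\<^sub>i, which solves a
   linear equation L' = -\<xi> L + q with bounded coefficients, is bounded as well.  The vector field
   of the system is Lipschitz on bounded sets, so the bounded solution has bounded derivative,
   extends continuously to r = S, and Picard iteration from that endpoint continues it beyond S. *)

section \<open>Scalar differential inequalities\<close>

lemma antimono_on_if_deriv_nonpos:
  fixes f f' :: "real \<Rightarrow> real"
  assumes deriv: "\<And>t. t \<in> {T..<S} \<Longrightarrow> (f has_real_derivative f' t) (at t within {T..<S})"
    and nonpos: "\<And>t. t \<in> {T..<S} \<Longrightarrow> f' t \<le> 0"
  shows "antimono_on {T..<S} f"
proof (rule monotone_onI)
  fix a b assume ab: "a \<in> {T..<S}" "b \<in> {T..<S}" "a \<le> b"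
  have "continuous_on {T..<S} f"
    unfolding continuous_on_eq_continuous_within using DERIV_continuous[OF deriv] by blast
  then have "continuous_on {a..b} f" by (rule continuous_on_subset) (use ab in auto)
  moreover have "\<exists>y. (f has_real_derivative y) (at x) \<and> y \<le> 0" if "a < x" "x < b" for x
  proof -
    have "at x within {T..<S} = at x" using that ab by (intro at_within_interior) auto
    then show ?thesis using that ab deriv[of x] nonpos[of x] by auto
  qed
  ultimately show "f b \<le> f a" using DERIV_nonpos_imp_decreasing_open[OF \<open>a \<le> b\<close>] by blast
qed

lemma bdd_below_if_antimono_on_not_tendsto_at_bot:
  fixes f :: "real \<Rightarrow> real"
  assumes "antimono_on {T..<S} f" "\<not> filterlim f at_bot (at_left S)"
  shows "\<exists>Z. \<forall>t\<in>{T..<S}. Z \<le> f t"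
proof -
  obtain Z where Z: "\<not> (\<forall>\<^sub>F t in at_left S. f t \<le> Z)"
    using assms(2) unfolding filterlim_at_bot by blast
  have "Z \<le> f t" if t: "t \<in> {T..<S}" for t
  proof (rule ccontr)
    assume "\<not> Z \<le> f t"
    moreover have "\<forall>\<^sub>F s in at_left S. f s \<le> f t"
      using eventually_at_left_real[of t S] t
      by (auto elim!: eventually_mono intro: monotone_onD[OF assms(1)])
    ultimately have "\<forall>\<^sub>F s in at_left S. f s \<le> Z" by (auto elim!: eventually_mono)
    with Z show False by blast
  qed
  then show ?thesis by blast
qed

lemma bounded_if_deriv_eq_mult:
  fixes R p \<xi> \<xi>' :: "real \<Rightarrow> real"
  assumes dR: "\<And>t. t \<in> {T..<S} \<Longrightarrow> (R has_real_derivative R t * p t) (at t within {T..<S})"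
    and d\<xi>: "\<And>t. t \<in> {T..<S} \<Longrightarrow> (\<xi> has_real_derivative \<xi>' t) (at t within {T..<S})"
    and dominated: "\<And>t. t \<in> {T..<S} \<Longrightarrow> 3 * \<xi>' t \<le> - ((p t)^2)"
    and lower: "\<And>t. t \<in> {T..<S} \<Longrightarrow> Z \<le> \<xi> t"
  shows "bounded (R ` {T..<S})"
proof -
  define g where "g t = (R t)^2 * exp (3 * \<xi> t - t)" for t
  have dg: "(g has_real_derivative (R t)^2 * exp (3 * \<xi> t - t) * (2 * p t + 3 * \<xi>' t - 1))
      (at t within {T..<S})" if "t \<in> {T..<S}" for t
    unfolding g_def
    by (rule derivative_eq_intros dR[OF that] d\<xi>[OF that] refl | simp add: algebra_simps power2_eq_square)+
  have "2 * p t + 3 * \<xi>' t - 1 \<le> 0" if "t \<in> {T..<S}" for t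
    using dominated[OF that] zero_le_power2[of "p t - 1"] by (simp add: power2_eq_square algebra_simps)
  then have "antimono_on {T..<S} g"
    by (intro antimono_on_if_deriv_nonpos[OF dg] mult_nonneg_nonpos) auto
  then have "(R t)^2 \<le> g T * exp (S - 3 * Z)" if t: "t \<in> {T..<S}" for t
  proof -
    have "(R t)^2 = g t * exp (t - 3 * \<xi> t)" by (simp add: g_def field_simps flip: exp_add)
    also have "\<dots> \<le> g T * exp (S - 3 * Z)"
      using t lower[OF t] \<open>antimono_on {T..<S} g\<close>
      by (intro mult_mono) (auto simp: g_def monotone_on_def)
    finally show ?thesis .
  qed
  then show ?thesis
    unfolding bounded_real by (auto intro!: exI[of _ "sqrt (g T * exp (S - 3 * Z))"] real_le_rsqrt)
qed

lemma bounded_if_linear_deriv: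
  fixes L \<xi> q :: "real \<Rightarrow> real"
  assumes dL: "\<And>t. t \<in> {T..<S} \<Longrightarrow> (L has_real_derivative - \<xi> t * L t + q t) (at t within {T..<S})"
    and "bounded (\<xi> ` {T..<S})" and "bounded (q ` {T..<S})"
  shows "bounded (L ` {T..<S})"
proof -
  obtain X Q where X: "\<And>t. t \<in> {T..<S} \<Longrightarrow> \<bar>\<xi> t\<bar> \<le> X" and Q: "\<And>t. t \<in> {T..<S} \<Longrightarrow> \<bar>q t\<bar> \<le> Q"
    using assms(2,3) unfolding bounded_real by (metis image_eqI)
  \<comment> \<open>\<open>2 L L' \<le> (2X + 1) L\<^sup>2 + Q\<^sup>2\<close>, hence \<open>h\<close> is nonincreasing\<close>
  define A where "A = 2 * X + 1"
  define h where "h t = ((L t)^2 + Q^2) * exp (- A * t)" for t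
  have dh: "(h has_real_derivative
      exp (- A * t) * (2 * L t * (- \<xi> t * L t + q t) - A * ((L t)^2 + Q^2))) (at t within {T..<S})"
    if "t \<in> {T..<S}" for t
    unfolding h_def
    by (rule derivative_eq_intros dL[OF that] refl | simp add: algebra_simps)+
  have "2 * L t * (- \<xi> t * L t + q t) - A * ((L t)^2 + Q^2) \<le> 0" if t: "t \<in> {T..<S}" for t
  proof -
    have "- \<xi> t * (L t)^2 \<le> X * (L t)^2" using X[OF t] by (intro mult_right_mono) auto
    moreover have "2 * L t * q t \<le> (L t)^2 + (q t)^2"
      using zero_le_power2[of "L t - q t"] by (simp add: power2_eq_square algebra_simps)
    moreover have "(q t)^2 \<le> Q^2" using Q[OF t] by (metis abs_ge_zero power2_abs power_mono)
    moreover have "0 \<le> X" using X[OF t] by linarith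
    then have "Q^2 \<le> A * Q^2" unfolding A_def by (simp add: algebra_simps)
    ultimately show ?thesis by (simp add: A_def power2_eq_square algebra_simps)
  qed
  then have "antimono_on {T..<S} h"
    by (intro antimono_on_if_deriv_nonpos[OF dh] mult_nonneg_nonpos) auto
  then have "(L t)^2 \<le> h T * exp (A * S)" if t: "t \<in> {T..<S}" for t
  proof -
    have "0 \<le> A" using X[OF t] unfolding A_def by linarith
    have "(L t)^2 \<le> (L t)^2 + Q^2" by simp
    also have "\<dots> = h t * exp (A * t)" by (simp add: h_def mult.assoc flip: exp_add)
    also have "\<dots> \<le> h T * exp (A * S)"
      using t \<open>0 \<le> A\<close> \<open>antimono_on {T..<S} h\<close>
      by (intro mult_mono) (auto simp: h_def monotone_on_def mult_left_mono)
    finally show ?thesis .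
  qed
  then show ?thesis
    unfolding bounded_real by (auto intro!: exI[of _ "sqrt (h T * exp (A * S))"] real_le_rsqrt)
qed

lemma bounded_mult_comp:
  fixes f g :: "'a \<Rightarrow> 'b::real_normed_algebra"
  assumes "bounded (f ` S)" "bounded (g ` S)"
  shows "bounded ((\<lambda>x. f x * g x) ` S)"
proof -
  obtain B C where "\<And>x. x \<in> S \<Longrightarrow> norm (f x) \<le> B" "\<And>x. x \<in> S \<Longrightarrow> norm (g x) \<le> C"
    using assms unfolding bounded_iff by (meson imageI)
  then have "\<And>x. x \<in> S \<Longrightarrow> norm (f x * g x) \<le> B * C"
    by (meson norm_mult_ineq mult_mono norm_ge_zero order_trans)
  then show ?thesis unfolding bounded_iff by blast
qed

section \<open>Lipschitz continuity on bounded sets\<close>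

definition lipschitz_on_bounded_sets :: "('a::metric_space \<Rightarrow> 'b::metric_space) \<Rightarrow> bool" where
  "lipschitz_on_bounded_sets f \<longleftrightarrow> (\<forall>A. bounded A \<longrightarrow> (\<exists>L. L-lipschitz_on A f))"

lemma lipschitz_on_bounded_setsI:
  "(\<And>A. bounded A \<Longrightarrow> \<exists>L. L-lipschitz_on A f) \<Longrightarrow> lipschitz_on_bounded_sets f"
  unfolding lipschitz_on_bounded_sets_def by blast

lemma lipschitz_on_bounded_setsE:
  assumes "lipschitz_on_bounded_sets f" "bounded A"
  obtains L where "L-lipschitz_on A f"
  using assms unfolding lipschitz_on_bounded_sets_def by blast

lemma bounded_image_if_lipschitz_on_bounded_sets:
  assumes "lipschitz_on_bounded_sets f" "bounded A"
  shows "bounded (f ` A)"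
proof (cases "A = {}")
  case False
  then obtain a where "a \<in> A" by blast
  obtain L where L: "L-lipschitz_on A f" using lipschitz_on_bounded_setsE assms .
  obtain e where "\<And>x. x \<in> A \<Longrightarrow> dist a x \<le> e" using assms(2) bounded_any_center by metis
  then have "\<And>x. x \<in> A \<Longrightarrow> dist (f a) (f x) \<le> L * e"
    using lipschitz_onD[OF L \<open>a \<in> A\<close>] lipschitz_on_nonneg[OF L] by (meson mult_left_mono order_trans)
  then show ?thesis unfolding bounded_def by blast
qed simp

lemma continuous_on_if_lipschitz_on_bounded_sets:
  assumes "lipschitz_on_bounded_sets f"
  shows "continuous_on UNIV f"
proof -
  have "isCont f x" for x
  proof -
    obtain L where "L-lipschitz_on (ball x 1) f"
      using lipschitz_on_bounded_setsE[OF assms bounded_ball] .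
    then show ?thesis
      by (intro continuous_on_interior[of "ball x 1"] lipschitz_on_continuous_on) auto
  qed
  then show ?thesis by (simp add: continuous_on_eq_continuous_at)
qed

lemma lipschitz_on_bounded_sets_const: "lipschitz_on_bounded_sets (\<lambda>x. c)"
  unfolding lipschitz_on_bounded_sets_def using lipschitz_on_constant by blast

lemma lipschitz_on_bounded_sets_add:
  fixes f g :: "'a::metric_space \<Rightarrow> 'b::real_normed_vector"
  shows "lipschitz_on_bounded_sets f \<Longrightarrow> lipschitz_on_bounded_sets g \<Longrightarrow>
    lipschitz_on_bounded_sets (\<lambda>x. f x + g x)"
  unfolding lipschitz_on_bounded_sets_def by (metis lipschitz_on_add)

lemma lipschitz_on_bounded_sets_minus:
  fixes f :: "'a::metric_space \<Rightarrow> 'b::real_normed_vector"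
  shows "lipschitz_on_bounded_sets f \<Longrightarrow> lipschitz_on_bounded_sets (\<lambda>x. - f x)"
  by (simp add: lipschitz_on_bounded_sets_def)

lemma lipschitz_on_bounded_sets_diff:
  fixes f g :: "'a::metric_space \<Rightarrow> 'b::real_normed_vector"
  shows "lipschitz_on_bounded_sets f \<Longrightarrow> lipschitz_on_bounded_sets g \<Longrightarrow>
    lipschitz_on_bounded_sets (\<lambda>x. f x - g x)"
  unfolding lipschitz_on_bounded_sets_def by (metis lipschitz_on_diff)

lemma lipschitz_on_bounded_sets_mult:
  fixes f g :: "'a::metric_space \<Rightarrow> 'b::real_normed_algebra"
  assumes f: "lipschitz_on_bounded_sets f" and g: "lipschitz_on_bounded_sets g"
  shows "lipschitz_on_bounded_sets (\<lambda>x. f x * g x)"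
proof (rule lipschitz_on_bounded_setsI)
  fix A :: "'a set" assume A: "bounded A"
  obtain L M where L: "L-lipschitz_on A f" and M: "M-lipschitz_on A g"
    using lipschitz_on_bounded_setsE A f g by metis
  obtain B C where "B > 0" "C > 0"
    and B: "\<And>x. x \<in> A \<Longrightarrow> norm (f x) \<le> B" and C: "\<And>x. x \<in> A \<Longrightarrow> norm (g x) \<le> C"
    using bounded_image_if_lipschitz_on_bounded_sets[OF f A] bounded_image_if_lipschitz_on_bounded_sets[OF g A]
    unfolding bounded_pos by (meson imageI)
  have "dist (f x * g x) (f y * g y) \<le> (B * M + C * L) * dist x y" if "x \<in> A" "y \<in> A" for x y
  proof -
    have "f x * g x - f y * g y = f x * (g x - g y) + (f x - f y) * g y" by (simp add: algebra_simps)
    then have "dist (f x * g x) (f y * g y) \<le> norm (f x * (g x - g y)) + norm ((f x - f y) * g y)"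
      by (simp add: dist_norm norm_triangle_ineq)
    also have "\<dots> \<le> norm (f x) * dist (g x) (g y) + dist (f x) (f y) * norm (g y)"
      unfolding dist_norm by (intro add_mono norm_mult_ineq)
    also have "\<dots> \<le> B * (M * dist x y) + (L * dist x y) * C"
      using that B C lipschitz_onD[OF L that] lipschitz_onD[OF M that] \<open>B > 0\<close> lipschitz_on_nonneg[OF L]
      by (intro add_mono mult_mono) auto
    finally show ?thesis by (simp add: algebra_simps)
  qed
  moreover have "0 \<le> B * M + C * L"
    using \<open>B > 0\<close> \<open>C > 0\<close> lipschitz_on_nonneg[OF L] lipschitz_on_nonneg[OF M] by simp
  ultimately show "\<exists>K. K-lipschitz_on A (\<lambda>x. f x * g x)" by (blast intro: lipschitz_onI)
qed

lemma lipschitz_on_bounded_sets_power: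
  fixes f :: "'a::metric_space \<Rightarrow> 'b::real_normed_algebra_1"
  shows "lipschitz_on_bounded_sets f \<Longrightarrow> lipschitz_on_bounded_sets (\<lambda>x. f x ^ n)"
  by (induction n) (simp_all add: lipschitz_on_bounded_sets_const lipschitz_on_bounded_sets_mult)

lemma lipschitz_on_bounded_sets_divide:
  fixes f :: "'a::metric_space \<Rightarrow> 'b::real_normed_field"
  shows "lipschitz_on_bounded_sets f \<Longrightarrow> lipschitz_on_bounded_sets (\<lambda>x. f x / c)"
  unfolding divide_inverse by (intro lipschitz_on_bounded_sets_mult lipschitz_on_bounded_sets_const)

lemma lipschitz_on_bounded_sets_id: "lipschitz_on_bounded_sets (\<lambda>x. x)"
  unfolding lipschitz_on_bounded_sets_def using lipschitz_on_id by blast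

lemma lipschitz_on_bounded_sets_fst:
  "lipschitz_on_bounded_sets f \<Longrightarrow> lipschitz_on_bounded_sets (\<lambda>x. fst (f x))"
  unfolding lipschitz_on_bounded_sets_def lipschitz_on_def by (meson dist_fst_le order_trans)

lemma lipschitz_on_bounded_sets_snd:
  "lipschitz_on_bounded_sets f \<Longrightarrow> lipschitz_on_bounded_sets (\<lambda>x. snd (f x))"
  unfolding lipschitz_on_bounded_sets_def lipschitz_on_def by (meson dist_snd_le order_trans)

lemma lipschitz_on_bounded_sets_Pair:
  "lipschitz_on_bounded_sets f \<Longrightarrow> lipschitz_on_bounded_sets g \<Longrightarrow>
    lipschitz_on_bounded_sets (\<lambda>x. (f x, g x))"
  unfolding lipschitz_on_bounded_sets_def by (metis lipschitz_on_Pair)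

lemmas lipschitz_on_bounded_sets_intros =
  lipschitz_on_bounded_sets_const lipschitz_on_bounded_sets_id
  lipschitz_on_bounded_sets_fst lipschitz_on_bounded_sets_snd lipschitz_on_bounded_sets_Pair
  lipschitz_on_bounded_sets_add lipschitz_on_bounded_sets_minus lipschitz_on_bounded_sets_diff
  lipschitz_on_bounded_sets_mult lipschitz_on_bounded_sets_power lipschitz_on_bounded_sets_divide

section \<open>Local existence and continuation of solutions\<close>

\<comment> \<open>Clamping \<open>t\<close> to \<open>[a, b]\<close> makes the image a bounded continuous function on all of \<open>\<real>\<close>.\<close>
definition picard_map :: "('a::banach \<Rightarrow> 'a) \<Rightarrow> 'a \<Rightarrow> real \<Rightarrow> real \<Rightarrow> (real \<Rightarrow> 'a) \<Rightarrow> real \<Rightarrow> 'a" where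
  "picard_map F y0 a b f t = y0 + integral {a..max a (min t b)} (\<lambda>s. F (f s))"

lemma continuous_on_picard_map:
  assumes "continuous_on UNIV F" "continuous_on UNIV f" "a \<le> b"
  shows "continuous_on UNIV (picard_map F y0 a b f)"
proof -
  have "continuous_on {a..b} (\<lambda>s. F (f s))"
    using assms by (auto intro: continuous_on_compose2[OF assms(1)] continuous_on_subset[OF assms(2)])
  then have "continuous_on {a..b} (\<lambda>t. integral {a..t} (\<lambda>s. F (f s)))"
    by (intro indefinite_integral_continuous_1 integrable_continuous_real)
  then have "continuous_on UNIV (\<lambda>t. integral {a..max a (min t b)} (\<lambda>s. F (f s)))"
    by (rule continuous_on_compose2[of _ _ _ "\<lambda>t. max a (min t b)"])
      (use \<open>a \<le> b\<close> in \<open>auto intro!: continuous_intros\<close>)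
  then show ?thesis unfolding picard_map_def[abs_def] by (intro continuous_intros)
qed

lemma picard_map_in_cball:
  assumes "continuous_on UNIV F" "continuous_on UNIV f" and f: "\<And>t. f t \<in> cball y0 r"
    and M: "\<And>u. u \<in> cball y0 r \<Longrightarrow> norm (F u) \<le> M" and "a \<le> b" "(b - a) * M \<le> r"
  shows "picard_map F y0 a b f t \<in> cball y0 r"
proof -
  have "0 \<le> M" using M[OF f] norm_ge_zero order_trans by blast
  have "continuous_on {a..max a (min t b)} (\<lambda>s. F (f s))"
    using assms by (auto intro: continuous_on_compose2[OF assms(1)] continuous_on_subset[OF assms(2)])
  then have "norm (integral {a..max a (min t b)} (\<lambda>s. F (f s))) \<le> M * (max a (min t b) - a)"
    using \<open>a \<le> b\<close> f M by (intro integral_bound) auto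
  also have "\<dots> \<le> M * (b - a)" using \<open>0 \<le> M\<close> \<open>a \<le> b\<close> by (intro mult_left_mono) auto
  finally show ?thesis
    using \<open>(b - a) * M \<le> r\<close> by (simp add: picard_map_def dist_norm mult.commute)
qed

lemma dist_picard_map_le:
  assumes F: "continuous_on UNIV F" and lip: "K-lipschitz_on (cball y0 r) F"
    and "continuous_on UNIV f" "continuous_on UNIV g"
    and fg: "\<And>t. f t \<in> cball y0 r" "\<And>t. g t \<in> cball y0 r"
    and D: "\<And>t. dist (f t) (g t) \<le> D" and "a \<le> b"
  shows "dist (picard_map F y0 a b f t) (picard_map F y0 a b g t) \<le> K * (b - a) * D"
proof -
  let ?c = "max a (min t b)"
  have "continuous_on {a..?c} (\<lambda>s. F (f s))" "continuous_on {a..?c} (\<lambda>s. F (g s))"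
    using assms by (auto intro: continuous_on_compose2[OF F] continuous_on_subset)
  then have "dist (picard_map F y0 a b f t) (picard_map F y0 a b g t)
      = norm (integral {a..?c} (\<lambda>s. F (f s) - F (g s)))"
    by (simp add: picard_map_def dist_norm integral_diff integrable_continuous_real)
  also have "\<dots> \<le> (K * D) * (?c - a)"
  proof (rule integral_bound)
    fix s
    have "norm (F (f s) - F (g s)) \<le> K * dist (f s) (g s)"
      using lipschitz_onD[OF lip fg(1,2)] by (simp add: dist_norm)
    also have "\<dots> \<le> K * D" using lipschitz_on_nonneg[OF lip] D by (intro mult_left_mono)
    finally show "norm (F (f s) - F (g s)) \<le> K * D" .
  qed (use \<open>a \<le> b\<close> \<open>continuous_on {a..?c} (\<lambda>s. F (f s))\<close> \<open>continuous_on {a..?c} (\<lambda>s. F (g s))\<close>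
      in \<open>auto intro: continuous_on_diff\<close>)
  also have "\<dots> \<le> (K * D) * (b - a)"
    using \<open>a \<le> b\<close> lipschitz_on_nonneg[OF lip] order_trans[OF zero_le_dist D]
    by (intro mult_left_mono) auto
  finally show ?thesis by (simp add: algebra_simps)
qed

lemma picard_map_fixed_point:
  fixes F :: "'a::banach \<Rightarrow> 'a"
  assumes cont: "continuous_on UNIV F" and lip: "K-lipschitz_on (cball y0 r) F" and "0 \<le> r"
    and M: "\<And>u. u \<in> cball y0 r \<Longrightarrow> norm (F u) \<le> M"
    and "a \<le> b" "(b - a) * M \<le> r" "K * (b - a) \<le> 1/2"
  obtains f :: "real \<Rightarrow>\<^sub>C 'a" where "\<And>t. t \<in> {a..b} \<Longrightarrow> f t = y0 + integral {a..t} (\<lambda>s. F (f s))"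
proof -
  define X :: "(real \<Rightarrow>\<^sub>C 'a) set" where "X = PiC UNIV (\<lambda>_. cball y0 r)"
  have X_iff: "f \<in> X \<longleftrightarrow> (\<forall>t. f t \<in> cball y0 r)" for f
    unfolding X_def mem_PiC_iff by auto
  have in_cball: "picard_map F y0 a b (apply_bcontfun f) t \<in> cball y0 r" if "f \<in> X" for f t
    using that by (intro picard_map_in_cball[OF cont _ _ M \<open>a \<le> b\<close> \<open>(b - a) * M \<le> r\<close>]) (auto simp: X_iff)
  have "picard_map F y0 a b (apply_bcontfun f) \<in> bcontfun" if "f \<in> X" for f
  proof (rule bcontfun_normI)
    show "continuous_on UNIV (picard_map F y0 a b (apply_bcontfun f))"
      by (intro continuous_on_picard_map cont \<open>a \<le> b\<close> continuous_on_apply_bcontfun)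
    show "norm (picard_map F y0 a b (apply_bcontfun f) t) \<le> norm y0 + r" for t
      using in_cball[OF that, of t] norm_triangle_ineq2[of "picard_map F y0 a b (apply_bcontfun f) t" y0]
      by (auto simp: dist_norm norm_minus_commute)
  qed
  define P where "P f = Bcontfun (picard_map F y0 a b (apply_bcontfun f))" for f
  have apply_P: "apply_bcontfun (P f) = picard_map F y0 a b (apply_bcontfun f)" if "f \<in> X" for f
    using \<open>_ \<Longrightarrow> _ \<in> bcontfun\<close>[OF that] by (simp add: P_def Bcontfun_inverse)
  have "P ` X \<subseteq> X" using in_cball apply_P by (auto simp: X_iff)
  moreover have "dist (P f) (P g) \<le> 1/2 * dist f g" if "f \<in> X" "g \<in> X" for f g
  proof (rule dist_bound)
    fix t
    have "dist (picard_map F y0 a b f t) (picard_map F y0 a b g t) \<le> K * (b - a) * dist f g"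
      using that unfolding X_iff
      by (intro dist_picard_map_le[OF cont lip continuous_on_apply_bcontfun continuous_on_apply_bcontfun _ _
          dist_bounded \<open>a \<le> b\<close>]) auto
    also have "\<dots> \<le> 1/2 * dist f g" using \<open>K * (b - a) \<le> 1/2\<close> by (intro mult_right_mono) auto
    finally show "dist (P f t) (P g t) \<le> 1/2 * dist f g"
      using that by (simp add: apply_P)
  qed
  moreover have "complete X" unfolding X_def complete_eq_closed by (intro closed_PiC) auto
  moreover have "const_bcontfun y0 \<in> X" using \<open>0 \<le> r\<close> by (simp add: X_iff)
  ultimately obtain f where "f \<in> X" "P f = f"
    using Banach_fix[of X "1/2" P] by auto
  then have eq: "apply_bcontfun f = picard_map F y0 a b (apply_bcontfun f)"
    using apply_P by metis
  have "f t = y0 + integral {a..t} (\<lambda>s. F (f s))" if "t \<in> {a..b}" for t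
    using fun_cong[OF eq, of t] that by (simp add: picard_map_def)
  then show ?thesis by (rule that)
qed

lemma local_existence_ode:
  fixes F :: "'a::banach \<Rightarrow> 'a"
  assumes cont: "continuous_on UNIV F" and "r > 0" and lip: "K-lipschitz_on (cball y0 r) F"
  obtains e y where "e > 0" "y a = y0"
    "\<And>t. t \<in> {a..a+e} \<Longrightarrow> (y has_vector_derivative F (y t)) (at t within {a..a+e})"
proof -
  have "K \<ge> 0" using lip by (rule lipschitz_on_nonneg)
  define M where "M = norm (F y0) + K * r"
  have M: "norm (F u) \<le> M" if "u \<in> cball y0 r" for u
  proof -
    have "norm (F u - F y0) \<le> K * norm (u - y0)"
      using lipschitz_on_normD[OF lip that] \<open>r > 0\<close> by simp
    also have "\<dots> \<le> K * r"
      using that \<open>K \<ge> 0\<close> by (intro mult_left_mono) (auto simp: dist_norm norm_minus_commute)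
    finally show ?thesis unfolding M_def using norm_triangle_ineq2[of "F u" "F y0"] by linarith
  qed
  have "M \<ge> 0" unfolding M_def using \<open>K \<ge> 0\<close> \<open>r > 0\<close> by simp
  define e where "e = min (r / (M + 1)) (1 / (2 * K + 2))"
  have "e > 0" unfolding e_def using \<open>M \<ge> 0\<close> \<open>r > 0\<close> \<open>K \<ge> 0\<close> by simp
  have "e * M \<le> r"
  proof -
    have "e * M \<le> r / (M + 1) * M" unfolding e_def using \<open>M \<ge> 0\<close> by (intro mult_right_mono) auto
    also have "\<dots> \<le> r" using \<open>M \<ge> 0\<close> \<open>r > 0\<close> by (simp add: field_simps)
    finally show ?thesis .
  qed
  have "K * e \<le> 1/2"
  proof -
    have "K * e \<le> K * (1 / (2 * K + 2))" unfolding e_def using \<open>K \<ge> 0\<close> by (intro mult_left_mono) auto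
    also have "\<dots> \<le> 1/2" using \<open>K \<ge> 0\<close> by (simp add: field_simps)
    finally show ?thesis .
  qed
  obtain f :: "real \<Rightarrow>\<^sub>C 'a"
    where f: "\<And>t. t \<in> {a..a+e} \<Longrightarrow> f t = y0 + integral {a..t} (\<lambda>s. F (f s))"
    using picard_map_fixed_point[OF cont lip _ M, of a "a + e"] \<open>r > 0\<close> \<open>e > 0\<close> \<open>e * M \<le> r\<close> \<open>K * e \<le> 1/2\<close>
    by auto
  have "continuous_on {a..a+e} (\<lambda>s. F (f s))"
    by (rule continuous_on_compose2[OF cont continuous_on_apply_bcontfun]) auto
  show ?thesis
  proof
    show "f a = y0" using f[of a] \<open>e > 0\<close> by simp
    fix t assume t: "t \<in> {a..a+e}"
    have "((\<lambda>u. y0 + integral {a..u} (\<lambda>s. F (f s))) has_vector_derivative F (f t)) (at t within {a..a+e})"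
      using integral_has_vector_derivative[OF \<open>continuous_on {a..a+e} (\<lambda>s. F (f s))\<close> t]
      by (auto intro!: derivative_eq_intros)
    from has_vector_derivative_transform[OF t f this]
    show "(f has_vector_derivative F (f t)) (at t within {a..a+e})" .
  qed (rule \<open>e > 0\<close>)
qed

lemma has_vector_derivative_if_continuous_off_finite:
  fixes f f' :: "real \<Rightarrow> 'a::banach"
  assumes "finite K" and f: "continuous_on {a..b} f" and f': "continuous_on {a..b} f'"
    and deriv: "\<And>s. s \<in> {a<..<b} - K \<Longrightarrow> (f has_vector_derivative f' s) (at s)"
    and t: "t \<in> {a..b}"
  shows "(f has_vector_derivative f' t) (at t within {a..b})"
proof -
  have "f s = f a + integral {a..s} f'" if s: "s \<in> {a..b}" for s
  proof -
    have "(f' has_integral f s - f a) {a..s}"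
      using s by (intro fundamental_theorem_of_calculus_interior_strong[OF \<open>finite K\<close>] deriv
          continuous_on_subset[OF f]) auto
    then show ?thesis by (simp add: integral_unique)
  qed
  moreover have "((\<lambda>s. f a + integral {a..s} f') has_vector_derivative f' t) (at t within {a..b})"
    using integral_has_vector_derivative[OF f' t] by (auto intro!: derivative_eq_intros)
  ultimately show ?thesis by (rule has_vector_derivative_transform[OF t])
qed

lemma bounded_vector_derivative_imp_lipschitz:
  assumes "\<And>t. t \<in> X \<Longrightarrow> (f has_vector_derivative f' t) (at t within X)" and "convex X"
    and "\<And>t. t \<in> X \<Longrightarrow> norm (f' t) \<le> B" and "0 \<le> B"
  shows "B-lipschitz_on X f"
proof (rule bounded_derivative_imp_lipschitz)
  show "(f has_derivative (\<lambda>h. h *\<^sub>R f' t)) (at t within X)" if "t \<in> X" for t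
    using assms(1)[OF that] by (simp add: has_vector_derivative_def)
  show "onorm (\<lambda>h. h *\<^sub>R f' t) \<le> B" if "t \<in> X" for t
    using assms(3)[OF that] by (simp add: onorm_scaleR_left[OF bounded_linear_ident] onorm_id)
qed fact+

lemma has_vector_derivative_glue:
  fixes F :: "'a::banach \<Rightarrow> 'a"
  assumes F: "continuous_on UNIV F" and "T \<le> S" "S \<le> U"
    and f: "continuous_on {T..S} f" "\<And>t. t \<in> {T<..<S} \<Longrightarrow> (f has_vector_derivative F (f t)) (at t)"
    and g: "continuous_on {S..U} g" "\<And>t. t \<in> {S<..<U} \<Longrightarrow> (g has_vector_derivative F (g t)) (at t)"
    and "f S = g S" and t: "t \<in> {T..U}"
  shows "((\<lambda>t. if t \<le> S then f t else g t) has_vector_derivative F (if t \<le> S then f t else g t))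
    (at t within {T..U})"
proof -
  define h where "h t = (if t \<le> S then f t else g t)" for t
  have h_cont: "continuous_on {T..U} h"
    unfolding h_def using \<open>T \<le> S\<close> \<open>S \<le> U\<close> \<open>f S = g S\<close> f(1) g(1)
    by (intro continuous_on_cases_le continuous_on_id) (auto elim!: continuous_on_subset)
  have "(h has_vector_derivative F (h s)) (at s)" if s: "s \<in> {T<..<U} - {S}" for s
  proof (cases "s < S")
    case True
    have "f x = h x" if "x \<in> {T<..<S}" for x using that by (simp add: h_def)
    with f(2)[of s] s True show ?thesis
      by (metis has_vector_derivative_transform_within_open open_greaterThanLessThan
          greaterThanLessThan_iff DiffD1 h_def less_imp_le)
  next
    case False
    have "g x = h x" if "x \<in> {S<..<U}" for x using that by (simp add: h_def)
    with g(2)[of s] s False show ?thesis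
      by (metis has_vector_derivative_transform_within_open open_greaterThanLessThan
          greaterThanLessThan_iff DiffD1 DiffD2 singletonI linorder_neqE_linordered_idom h_def not_le)
  qed
  then have "(h has_vector_derivative F (h t)) (at t within {T..U})"
    using t h_cont continuous_on_compose2[OF F h_cont]
    by (intro has_vector_derivative_if_continuous_off_finite[of "{S}"]) auto
  then show ?thesis unfolding h_def .
qed

lemma bounded_solution_extends:
  fixes F :: "'a::euclidean_space \<Rightarrow> 'a"
  assumes F: "lipschitz_on_bounded_sets F" and "T < S"
    and Y: "\<And>t. t \<in> {T..<S} \<Longrightarrow> (Y has_vector_derivative F (Y t)) (at t within {T..<S})"
    and bdd: "bounded (Y ` {T..<S})"
  obtains S' Z where "S' > S"
    and "\<And>t. t \<in> {T..<S'} \<Longrightarrow> (Z has_vector_derivative F (Z t)) (at t within {T..<S'})"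
    and "\<And>t. t \<in> {T..<S} \<Longrightarrow> Z t = Y t"
proof -
  have F_cont: "continuous_on UNIV F" using F by (rule continuous_on_if_lipschitz_on_bounded_sets)
  obtain B where B: "\<And>t. t \<in> {T..<S} \<Longrightarrow> norm (F (Y t)) \<le> B"
    using bounded_image_if_lipschitz_on_bounded_sets[OF F bdd] unfolding bounded_iff image_image by blast
  then have "0 \<le> B" using \<open>T < S\<close> by (meson atLeastLessThan_iff norm_ge_zero order_refl order_trans)
  then have "B-lipschitz_on {T..<S} Y"
    using Y B by (intro bounded_vector_derivative_imp_lipschitz convex_real_interval)
  then obtain Yc where "B-lipschitz_on {T..S} Yc" and Yc_eq: "\<And>t. t \<in> {T..<S} \<Longrightarrow> Yc t = Y t"
    using lipschitz_extend_closure[of B "{T..<S}" Y] \<open>T < S\<close> by auto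
  then have Yc_cont: "continuous_on {T..S} Yc" by (intro lipschitz_on_continuous_on)
  have Yc: "(Yc has_vector_derivative F (Yc t)) (at t)" if t: "t \<in> {T<..<S}" for t
  proof -
    have "at t within {T..<S} = at t" using t by (intro at_within_open_subset[of _ "{T<..<S}"]) auto
    then have "(Y has_vector_derivative F (Yc t)) (at t)" using Y[of t] t Yc_eq[of t] by simp
    then show ?thesis
      using t Yc_eq by (metis has_vector_derivative_transform_within_open open_greaterThanLessThan
          greaterThanLessThan_iff atLeastLessThan_iff less_imp_le)
  qed
  obtain K where "K-lipschitz_on (cball (Yc S) 1) F"
    using lipschitz_on_bounded_setsE[OF F bounded_cball] .
  then obtain e y where "e > 0" and "y S = Yc S"
    and y: "\<And>t. t \<in> {S..S+e} \<Longrightarrow> (y has_vector_derivative F (y t)) (at t within {S..S+e})"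
    using local_existence_ode[OF F_cont zero_less_one] by metis
  have "continuous_on {S..S+e} y"
    unfolding continuous_on_eq_continuous_within using y has_vector_derivative_continuous by blast
  moreover have "(y has_vector_derivative F (y t)) (at t)" if "t \<in> {S<..<S+e}" for t
    using y[of t] that by (simp add: at_within_Icc_at)
  ultimately have Z: "((\<lambda>t. if t \<le> S then Yc t else y t) has_vector_derivative
      F (if t \<le> S then Yc t else y t)) (at t within {T..S+e})" if "t \<in> {T..S+e}" for t
    using \<open>T < S\<close> \<open>e > 0\<close> \<open>y S = Yc S\<close> that
    by (intro has_vector_derivative_glue[OF F_cont _ _ Yc_cont Yc]) auto
  show ?thesis
  proof (rule that[of "S + e" "\<lambda>t. if t \<le> S then Yc t else y t"])
    show "((\<lambda>t. if t \<le> S then Yc t else y t) has_vector_derivative F (if t \<le> S then Yc t else y t))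
        (at t within {T..<S+e})" if "t \<in> {T..<S+e}" for t
      using that by (intro has_vector_derivative_within_subset[OF Z]) auto
  qed (use \<open>e > 0\<close> Yc_eq in auto)
qed

section \<open>The system \<open>(S\<^sub>\<lambda>)\<close>\<close>

type_synonym state = "real \<times> real \<times> real \<times> real \<times> real \<times> real \<times> real"

definition system_field :: "real \<Rightarrow> state \<Rightarrow> state" where
  "system_field lam = (\<lambda>(x, l1, l2, l3, r1, r2, r3).
     (- (l1^2) - l2^2 - l3^2 - lam,
      - x * l1 + r1^2 / 2 - (r2 - r3)^2 / 2 - lam,
      - x * l2 + r2^2 / 2 - (r3 - r1)^2 / 2 - lam,
      - x * l3 + r3^2 / 2 - (r1 - r2)^2 / 2 - lam,
      r1 * (l1 - l2 - l3),
      r2 * (l2 - l3 - l1),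
      r3 * (l3 - l1 - l2)))"

lemma lipschitz_on_bounded_sets_system_field: "lipschitz_on_bounded_sets (system_field lam)"
  unfolding system_field_def split_beta by (intro lipschitz_on_bounded_sets_intros)

lemma has_vector_derivative_Pair_iff:
  "((\<lambda>x. (f x, g x)) has_vector_derivative (f', g')) (at x within s) \<longleftrightarrow>
    (f has_vector_derivative f') (at x within s) \<and> (g has_vector_derivative g') (at x within s)"
proof
  assume "((\<lambda>x. (f x, g x)) has_vector_derivative (f', g')) (at x within s)"
  from bounded_linear.has_vector_derivative[OF bounded_linear_fst this]
    bounded_linear.has_vector_derivative[OF bounded_linear_snd this]
  show "(f has_vector_derivative f') (at x within s) \<and> (g has_vector_derivative g') (at x within s)"
    by simp
qed (auto intro: has_vector_derivative_Pair)

lemma sol_on_iff_has_vector_derivative: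
  "sol_on lam I xi L1 L2 L3 R1 R2 R3 \<longleftrightarrow>
    (\<forall>t\<in>I. ((\<lambda>t. (xi t, L1 t, L2 t, L3 t, R1 t, R2 t, R3 t)) has_vector_derivative
       system_field lam (xi t, L1 t, L2 t, L3 t, R1 t, R2 t, R3 t)) (at t within I))"
  by (simp add: sol_on_def system_field_def has_vector_derivative_Pair_iff
      flip: has_real_derivative_iff_has_vector_derivative)

lemma bounded_sol_on_if_not_tendsto_at_bot:
  assumes "lam \<ge> 0" and sol: "sol_on lam {T..<S} xi L1 L2 L3 R1 R2 R3"
    and "\<not> filterlim xi at_bot (at_left S)"
  shows "bounded ((\<lambda>t. (xi t, L1 t, L2 t, L3 t, R1 t, R2 t, R3 t)) ` {T..<S})"
proof -
  let ?I = "{T..<S}"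
  define xi' where "xi' t = - ((L1 t)^2) - (L2 t)^2 - (L3 t)^2 - lam" for t
  have dxi: "\<And>t. t \<in> ?I \<Longrightarrow> (xi has_real_derivative xi' t) (at t within ?I)"
   and dL1: "\<And>t. t \<in> ?I \<Longrightarrow> (L1 has_real_derivative
      - xi t * L1 t + ((R1 t)^2 / 2 - (R2 t - R3 t)^2 / 2 - lam)) (at t within ?I)"
   and dL2: "\<And>t. t \<in> ?I \<Longrightarrow> (L2 has_real_derivative
      - xi t * L2 t + ((R2 t)^2 / 2 - (R3 t - R1 t)^2 / 2 - lam)) (at t within ?I)"
   and dL3: "\<And>t. t \<in> ?I \<Longrightarrow> (L3 has_real_derivative
      - xi t * L3 t + ((R3 t)^2 / 2 - (R1 t - R2 t)^2 / 2 - lam)) (at t within ?I)"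
   and dR1: "\<And>t. t \<in> ?I \<Longrightarrow> (R1 has_real_derivative R1 t * (L1 t - L2 t - L3 t)) (at t within ?I)"
   and dR2: "\<And>t. t \<in> ?I \<Longrightarrow> (R2 has_real_derivative R2 t * (L2 t - L3 t - L1 t)) (at t within ?I)"
   and dR3: "\<And>t. t \<in> ?I \<Longrightarrow> (R3 has_real_derivative R3 t * (L3 t - L1 t - L2 t)) (at t within ?I)"
    using sol unfolding sol_on_def xi'_def by (simp_all add: algebra_simps)
  have "xi' t \<le> 0" for t
    using \<open>lam \<ge> 0\<close> unfolding xi'_def by (smt (verit) zero_le_power2)
  then have "antimono_on ?I xi" using antimono_on_if_deriv_nonpos[OF dxi] by blast
  moreover obtain Z where lower: "\<And>t. t \<in> ?I \<Longrightarrow> Z \<le> xi t"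
    using bdd_below_if_antimono_on_not_tendsto_at_bot[OF calculation assms(3)] by blast
  ultimately have "xi ` ?I \<subseteq> {Z..xi T}" by (auto simp: monotone_on_def)
  then have xi: "bounded (xi ` ?I)" by (rule bounded_subset[OF bounded_closed_interval])
  have dominated: "3 * xi' t \<le> - ((a - b - c)^2)"
    if "a^2 + b^2 + c^2 = (L1 t)^2 + (L2 t)^2 + (L3 t)^2" for t a b c
  proof -
    have "3 * (a^2 + b^2 + c^2) - (a - b - c)^2 = (a + b)^2 + (a + c)^2 + (b - c)^2"
      by (simp add: power2_eq_square algebra_simps)
    then show ?thesis using that \<open>lam \<ge> 0\<close> unfolding xi'_def by (smt (verit) zero_le_power2)
  qed
  have R: "bounded (R1 ` ?I)" "bounded (R2 ` ?I)" "bounded (R3 ` ?I)"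
    using bounded_if_deriv_eq_mult[OF dR1 dxi dominated lower]
      bounded_if_deriv_eq_mult[OF dR2 dxi dominated lower]
      bounded_if_deriv_eq_mult[OF dR3 dxi dominated lower]
    by (simp_all add: algebra_simps)
  have q: "bounded ((\<lambda>t. (R1 t)^2 / 2 - (R2 t - R3 t)^2 / 2 - lam) ` ?I)"
    "bounded ((\<lambda>t. (R2 t)^2 / 2 - (R3 t - R1 t)^2 / 2 - lam) ` ?I)"
    "bounded ((\<lambda>t. (R3 t)^2 / 2 - (R1 t - R2 t)^2 / 2 - lam) ` ?I)"
    by (simp_all only: power2_eq_square divide_inverse;
        intro bounded_minus_comp bounded_mult_comp R; simp add: image_constant_conv)+
  have L: "bounded (L1 ` ?I)" "bounded (L2 ` ?I)" "bounded (L3 ` ?I)"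
    using bounded_if_linear_deriv[OF dL1 xi q(1)] bounded_if_linear_deriv[OF dL2 xi q(2)]
      bounded_if_linear_deriv[OF dL3 xi q(3)] by simp_all
  have "(\<lambda>t. (xi t, L1 t, L2 t, L3 t, R1 t, R2 t, R3 t)) ` ?I
      \<subseteq> xi ` ?I \<times> L1 ` ?I \<times> L2 ` ?I \<times> L3 ` ?I \<times> R1 ` ?I \<times> R2 ` ?I \<times> R3 ` ?I"
    by auto
  then show ?thesis by (rule bounded_subset[rotated]) (intro bounded_Times xi L R)
qed

lemma extendable_past_if_has_vector_derivative:
  assumes "S' > S"
    and Z: "\<And>t. t \<in> {T..<S'} \<Longrightarrow> (Z has_vector_derivative system_field lam (Z t)) (at t within {T..<S'})"
    and Z_eq: "\<And>t. t \<in> {T..<S} \<Longrightarrow> Z t = (xi t, L1 t, L2 t, L3 t, R1 t, R2 t, R3 t)"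
  shows "extendable_past lam T S xi L1 L2 L3 R1 R2 R3"
proof -
  have "sol_on lam {T..<S'} (\<lambda>t. fst (Z t)) (\<lambda>t. fst (snd (Z t)))
      (\<lambda>t. fst (snd (snd (Z t)))) (\<lambda>t. fst (snd (snd (snd (Z t))))) (\<lambda>t. fst (snd (snd (snd (snd (Z t))))))
      (\<lambda>t. fst (snd (snd (snd (snd (snd (Z t))))))) (\<lambda>t. snd (snd (snd (snd (snd (snd (Z t)))))))"
    using Z by (simp add: sol_on_iff_has_vector_derivative)
  then show ?thesis
    unfolding extendable_past_def using \<open>S' > S\<close> Z_eq by fastforce
qed

theorem proposition3p3:
  fixes lam T S :: real and xi L1 L2 L3 R1 R2 R3 :: "real \<Rightarrow> real"
  assumes "lam \<ge> 0"
    and "T < S"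
    and "sol_on lam {T..<S} xi L1 L2 L3 R1 R2 R3"
    and "\<not> extendable_past lam T S xi L1 L2 L3 R1 R2 R3"
  shows "filterlim xi at_bot (at_left S)"
proof (rule ccontr)
  assume "\<not> filterlim xi at_bot (at_left S)"
  define Y where "Y t = (xi t, L1 t, L2 t, L3 t, R1 t, R2 t, R3 t)" for t
  have "bounded (Y ` {T..<S})"
    unfolding Y_def using bounded_sol_on_if_not_tendsto_at_bot assms(1,3) \<open>\<not> filterlim xi at_bot (at_left S)\<close> .
  moreover have "\<And>t. t \<in> {T..<S} \<Longrightarrow>
      (Y has_vector_derivative system_field lam (Y t)) (at t within {T..<S})"
    using assms(3) unfolding sol_on_iff_has_vector_derivative Y_def by blast
  ultimately obtain S' Z where "S' > S"
    and "\<And>t. t \<in> {T..<S'} \<Longrightarrow> (Z has_vector_derivative system_field lam (Z t)) (at t within {T..<S'})"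
    and "\<And>t. t \<in> {T..<S} \<Longrightarrow> Z t = Y t"
    using bounded_solution_extends[OF lipschitz_on_bounded_sets_system_field \<open>T < S\<close>] by metis
  then have "extendable_past lam T S xi L1 L2 L3 R1 R2 R3"
    unfolding Y_def by (rule extendable_past_if_has_vector_derivative)
  with assms(4) show False ..
qed

end
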